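(* Let $N\ge 1$ and $M$ be integers and let $\mathcal{G}_{N,M}=\{G_1,\dots,G_{S_{N,M}}\}$ be the set of simple undirected networks (no self-edges, no repeated edges) on the fixed node set $\{1,\dots,N\}$ with exactly $M$ edges, so $S_{N,M}=\binom{N(N-1)/2}{M}$. Consider the Markov chain on $\mathcal{G}_{N,M}$ given by uniform rewiring, with transition matrix $P_{rs}$ equal to the probability that one uniform rewire turns $G_r$ into $G_s$, and let $\pi^{(t)}$ evolve by $\pi^{(t+1)}_s=\sum_r \pi^{(t)}_r P_{rs}$ from an initial distribution $\pi^{(0)}$ concentrated on an initial network $G^{(0)}\in\mathcal{G}_{N,M}$. Then this Markov chain is ergodic and has the uniform stationary distribution: $\lim_{t\to\infty}\pi^{(t)}_s=S_{N,M}^{-1}$ for every $s$.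
   Context: Uniform rewiring is the stochastic map on $\mathcal{G}_{N,M}$ taking a network with edge set $\mathcal{E}$ to the network with edge set $(\mathcal{E}\setminus\{(i,j)\})\cup\{(i',j')\}$, where $(i,j)$ is chosen uniformly at random from $\mathcal{E}$, and then $(i',j')$ is chosen uniformly at random among the $N(N-1)/2-M+1$ node pairs $\{i',j'\}$, $i'\neq j'$, that are not edges of $\mathcal{E}\setminus\{(i,j)\}$ (so re-selecting $(i,j)$ is allowed). *)

theory Defs
  imports Complex_Main
begin

definition node_pairs :: "nat \<Rightarrow> nat set set" where
  "node_pairs N = {e. e \<subseteq> {1..N} \<and> card e = 2}"

definition networks :: "nat \<Rightarrow> nat \<Rightarrow> nat set set set" where
  "networks N M = {E. E \<subseteq> node_pairs N \<and> card E = M}"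

text \<open>Transition probability of uniform rewiring: pick an edge e of E uniformly,
  then pick f uniformly among node pairs not in E - {e}; the new network is (E - {e}) \<union> {f}.\<close>
definition rewire_prob :: "nat \<Rightarrow> nat set set \<Rightarrow> nat set set \<Rightarrow> real" where
  "rewire_prob N E E' =
     (\<Sum>e\<in>E. (1 / real (card E)) *
        (\<Sum>f\<in>node_pairs N - (E - {e}).
            (1 / real (card (node_pairs N - (E - {e})))) *
            (if (E - {e}) \<union> {f} = E' then 1 else 0)))"

fun rewire_steps :: "nat \<Rightarrow> nat \<Rightarrow> nat \<Rightarrow> nat set set \<Rightarrow> nat set set \<Rightarrow> real" where
  "rewire_steps N M 0 r s = (if r = s then 1 else 0)"
| "rewire_steps N M (Suc t) r s =
     (\<Sum>q\<in>networks N M. rewire_steps N M t r q * rewire_prob N q s)"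

fun rewire_dist :: "nat \<Rightarrow> nat \<Rightarrow> nat set set \<Rightarrow> nat \<Rightarrow> nat set set \<Rightarrow> real" where
  "rewire_dist N M G0 0 s = (if s = G0 then 1 else 0)"
| "rewire_dist N M G0 (Suc t) s =
     (\<Sum>r\<in>networks N M. rewire_dist N M G0 t r * rewire_prob N r s)"

definition rewire_irreducible :: "nat \<Rightarrow> nat \<Rightarrow> bool" where
  "rewire_irreducible N M \<longleftrightarrow>
     (\<forall>r\<in>networks N M. \<forall>s\<in>networks N M. \<exists>t. rewire_steps N M t r s > 0)"

definition rewire_aperiodic :: "nat \<Rightarrow> nat \<Rightarrow> bool" where
  "rewire_aperiodic N M \<longleftrightarrow>
     (\<forall>r\<in>networks N M. Gcd {t. t > 0 \<and> rewire_steps N M t r r > 0} = 1)"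

definition rewire_ergodic :: "nat \<Rightarrow> nat \<Rightarrow> bool" where
  "rewire_ergodic N M \<longleftrightarrow> rewire_irreducible N M \<and> rewire_aperiodic N M"

end

theory Submission
  imports Defs
begin

text \<open>A rewire e \<mapsto> f taking E to E' is undone by the rewire f \<mapsto> e taking E' to E, and every
  rewire out of a network with M edges has probability 1/(M (K - M + 1)), K = N(N-1)/2. Hence the
  transition matrix is symmetric, in particular doubly stochastic, so the uniform distribution is
  stationary. Replacing the edges of E - E' one at a time by those of E' - E, and idling by
  re-selecting the removed edge, every network reaches every other one in exactly M steps. So all
  entries of P^M are at least some d > 0, and this Doeblin bound contracts the l^1-distance to
  the uniform distribution by the factor 1 - S d every M steps, S being the number of networks.\<close>

fun evolve :: "'a set \<Rightarrow> ('a \<Rightarrow> 'a \<Rightarrow> real) \<Rightarrow> ('a \<Rightarrow> real) \<Rightarrow> nat \<Rightarrow> 'a \<Rightarrow> real" where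
  "evolve X P d 0 = d"
| "evolve X P d (Suc t) = (\<lambda>s. \<Sum>r\<in>X. evolve X P d t r * P r s)"

definition point_mass :: "'a \<Rightarrow> 'a \<Rightarrow> real" where
  "point_mass r = (\<lambda>s. if s = r then 1 else 0)"

lemma evolve_add: "evolve X P d (a + b) = evolve X P (evolve X P d a) b"
  by (induction b) auto

lemma evolve_diff:
  "evolve X P (\<lambda>x. \<mu> x - \<nu> x) t s = evolve X P \<mu> t s - evolve X P \<nu> t s"
  by (induction t arbitrary: s) (auto simp: left_diff_distrib sum_subtractf)

lemma evolve_eq_sum_point_mass:
  assumes "finite X" "s \<in> X"
  shows "evolve X P d n s = (\<Sum>r\<in>X. d r * evolve X P (point_mass r) n s)"
  using assms(2)
proof (induction n arbitrary: s)
  case 0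
  have "(\<Sum>r\<in>X. d r * point_mass r s) = (\<Sum>r\<in>X. if s = r then d s else 0)"
    by (intro sum.cong) (auto simp: point_mass_def)
  then show ?case using assms(1) 0 by simp
next
  case (Suc n)
  have "evolve X P d (Suc n) s
      = (\<Sum>q\<in>X. (\<Sum>r\<in>X. d r * evolve X P (point_mass r) n q) * P q s)"
    using Suc.IH by simp
  also have "\<dots> = (\<Sum>q\<in>X. \<Sum>r\<in>X. d r * evolve X P (point_mass r) n q * P q s)"
    by (simp add: sum_distrib_right)
  also have "\<dots> = (\<Sum>r\<in>X. \<Sum>q\<in>X. d r * evolve X P (point_mass r) n q * P q s)"
    by (rule sum.swap)
  also have "\<dots> = (\<Sum>r\<in>X. d r * evolve X P (point_mass r) (Suc n) s)"
    by (simp add: sum_distrib_left mult.assoc)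
  finally show ?case .
qed

lemma finite_positive_lower_bound:
  assumes "finite A" and "\<And>x. x \<in> A \<Longrightarrow> 0 < f x"
  obtains d :: real where "0 < d" and "\<And>x. x \<in> A \<Longrightarrow> d \<le> f x"
proof (cases "A = {}")
  case True
  then show ?thesis using that[of 1] by simp
next
  case False
  then show ?thesis
    using that[of "Min (f ` A)"] assms by simp
qed

lemma tendsto_of_abs_diff_le_power_div:
  fixes f :: "nat \<Rightarrow> real"
  assumes "0 < n" and "0 \<le> c" and "c < 1" and bound: "\<And>t. \<bar>f t - L\<bar> \<le> c ^ (t div n) * K"
  shows "f \<longlonglongrightarrow> L"
proof -
  have "(\<lambda>k. c ^ k) \<longlonglongrightarrow> 0"
    using \<open>0 \<le> c\<close> \<open>c < 1\<close> by (intro LIMSEQ_power_zero) simp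
  then have "(\<lambda>t. c ^ (t div n)) \<longlonglongrightarrow> 0"
    by (rule filterlim_compose[OF _ filterlim_at_top_div_const_nat[OF \<open>0 < n\<close>]])
  then have "(\<lambda>t. c ^ (t div n) * K) \<longlonglongrightarrow> 0"
    by (rule tendsto_mult_left_zero)
  moreover have "\<forall>\<^sub>F t in sequentially. norm (f t - L) \<le> norm (c ^ (t div n) * K) * 1"
    by (intro always_eventually allI) (simp add: order_trans[OF bound abs_ge_self])
  ultimately have "(\<lambda>t. f t - L) \<longlonglongrightarrow> 0"
    by (rule tendsto_0_le)
  then show ?thesis by (rule LIM_zero_cancel)
qed

locale stochastic_matrix =
  fixes X :: "'a set" and P :: "'a \<Rightarrow> 'a \<Rightarrow> real"
  assumes finite_states: "finite X"
    and nonneg: "\<And>r s. r \<in> X \<Longrightarrow> s \<in> X \<Longrightarrow> 0 \<le> P r s"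
    and row_sum: "\<And>r. r \<in> X \<Longrightarrow> (\<Sum>s\<in>X. P r s) = 1"
begin

abbreviation steps :: "nat \<Rightarrow> 'a \<Rightarrow> 'a \<Rightarrow> real" where
  "steps n r s \<equiv> evolve X P (point_mass r) n s"

lemma sum_evolve: "(\<Sum>s\<in>X. evolve X P d t s) = (\<Sum>s\<in>X. d s)"
proof (induction t)
  case (Suc t)
  have "(\<Sum>s\<in>X. evolve X P d (Suc t) s) = (\<Sum>r\<in>X. \<Sum>s\<in>X. evolve X P d t r * P r s)"
    unfolding evolve.simps by (rule sum.swap)
  also have "\<dots> = (\<Sum>r\<in>X. evolve X P d t r)"
    by (simp add: sum_distrib_left[symmetric] row_sum)
  finally show ?case using Suc by simp
qed simp

lemma evolve_nonneg:
  "(\<And>s. s \<in> X \<Longrightarrow> 0 \<le> d s) \<Longrightarrow> s \<in> X \<Longrightarrow> 0 \<le> evolve X P d t s"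
  by (induction t arbitrary: s) (auto intro!: sum_nonneg mult_nonneg_nonneg nonneg)

lemma sum_steps: "r \<in> X \<Longrightarrow> (\<Sum>s\<in>X. steps n r s) = 1"
  using finite_states by (simp add: sum_evolve point_mass_def)

lemma steps_nonneg: "s \<in> X \<Longrightarrow> 0 \<le> steps n r s"
  by (rule evolve_nonneg) (auto simp: point_mass_def)

lemma steps_one:
  assumes "r \<in> X"
  shows "steps 1 r s = P r s"
proof -
  have "steps 1 r s = (\<Sum>q\<in>X. if q = r then P r s else 0)"
    by (auto simp: point_mass_def intro: sum.cong)
  then show ?thesis using finite_states assms by simp
qed

lemma steps_add_ge:
  assumes "r \<in> X" "q \<in> X" "s \<in> X"
  shows "steps a r q * steps b q s \<le> steps (a + b) r s"
proof -
  have "steps (a + b) r s = evolve X P (evolve X P (point_mass r) a) b s"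
    by (simp only: evolve_add)
  also have "\<dots> = (\<Sum>q'\<in>X. steps a r q' * steps b q' s)"
    by (rule evolve_eq_sum_point_mass[OF finite_states \<open>s \<in> X\<close>])
  finally have "steps (a + b) r s = (\<Sum>q'\<in>X. steps a r q' * steps b q' s)" .
  moreover have "steps a r q * steps b q s \<le> (\<Sum>q'\<in>X. steps a r q' * steps b q' s)"
    using assms by (intro member_le_sum) (auto intro!: mult_nonneg_nonneg steps_nonneg finite_states)
  ultimately show ?thesis by simp
qed

lemma steps_self_pos:
  assumes "r \<in> X" and "0 < P r r"
  shows "0 < steps t r r"
proof (induction t)
  case (Suc t)
  have "0 < steps t r r * steps 1 r r" using Suc assms steps_one[of r r] by simp
  also have "\<dots> \<le> steps (t + 1) r r" by (rule steps_add_ge[OF assms(1) assms(1) assms(1)])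
  finally show ?case by simp
qed (simp add: point_mass_def)

lemma l1_evolve_Suc_le:
  "(\<Sum>s\<in>X. \<bar>evolve X P e (Suc t) s\<bar>) \<le> (\<Sum>s\<in>X. \<bar>evolve X P e t s\<bar>)"
proof -
  have "(\<Sum>s\<in>X. \<bar>evolve X P e (Suc t) s\<bar>) \<le> (\<Sum>s\<in>X. \<Sum>r\<in>X. \<bar>evolve X P e t r\<bar> * P r s)"
    unfolding evolve.simps
    by (intro sum_mono order_trans[OF sum_abs]) (auto simp: abs_mult nonneg)
  also have "\<dots> = (\<Sum>r\<in>X. \<Sum>s\<in>X. \<bar>evolve X P e t r\<bar> * P r s)"
    by (rule sum.swap)
  also have "\<dots> = (\<Sum>s\<in>X. \<bar>evolve X P e t s\<bar>)"
    by (simp add: sum_distrib_left[symmetric] row_sum)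
  finally show ?thesis .
qed

lemma card_mult_lower_bound_le_one:
  assumes "r \<in> X" and "\<forall>s\<in>X. d \<le> steps n r s"
  shows "real (card X) * d \<le> 1"
  using sum_mono[of X "\<lambda>_. d" "steps n r"] assms sum_steps[of r n] by simp

lemma l1_evolve_contract:
  assumes low: "\<forall>r\<in>X. \<forall>s\<in>X. d \<le> steps n r s" and zero_mean: "(\<Sum>r\<in>X. e r) = 0"
  shows "(\<Sum>s\<in>X. \<bar>evolve X P e n s\<bar>) \<le> (1 - real (card X) * d) * (\<Sum>r\<in>X. \<bar>e r\<bar>)"
proof -
  have "(\<Sum>s\<in>X. \<bar>evolve X P e n s\<bar>) \<le> (\<Sum>s\<in>X. \<Sum>r\<in>X. \<bar>e r\<bar> * (steps n r s - d))"
  proof (rule sum_mono)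
    fix s assume s: "s \<in> X"
    \<comment> \<open>Since e has mean zero, d can be subtracted from every coefficient, making them all nonnegative.\<close>
    have "evolve X P e n s = (\<Sum>r\<in>X. e r * steps n r s)"
      by (rule evolve_eq_sum_point_mass[OF finite_states s])
    also have "\<dots> = (\<Sum>r\<in>X. e r * steps n r s) - (\<Sum>r\<in>X. e r) * d"
      using zero_mean by simp
    also have "\<dots> = (\<Sum>r\<in>X. e r * (steps n r s - d))"
      by (simp add: sum_distrib_right right_diff_distrib sum_subtractf)
    finally have "\<bar>evolve X P e n s\<bar> \<le> (\<Sum>r\<in>X. \<bar>e r * (steps n r s - d)\<bar>)"
      by (simp only: sum_abs)
    also have "\<dots> = (\<Sum>r\<in>X. \<bar>e r\<bar> * (steps n r s - d))"
      using s low by (intro sum.cong) (auto simp: abs_mult)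
    finally show "\<bar>evolve X P e n s\<bar> \<le> (\<Sum>r\<in>X. \<bar>e r\<bar> * (steps n r s - d))" .
  qed
  also have "\<dots> = (\<Sum>r\<in>X. \<Sum>s\<in>X. \<bar>e r\<bar> * (steps n r s - d))"
    by (rule sum.swap)
  also have "\<dots> = (\<Sum>r\<in>X. \<bar>e r\<bar> * (1 - real (card X) * d))"
    by (intro sum.cong refl)
      (simp add: sum_distrib_left[symmetric] sum_subtractf sum_steps)
  also have "\<dots> = (1 - real (card X) * d) * (\<Sum>r\<in>X. \<bar>e r\<bar>)"
    by (simp add: sum_distrib_right mult.commute)
  finally show ?thesis .
qed

lemma l1_evolve_geometric:
  assumes low: "\<forall>r\<in>X. \<forall>s\<in>X. d \<le> steps n r s" and zero_mean: "(\<Sum>r\<in>X. e r) = 0"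
  shows "(\<Sum>s\<in>X. \<bar>evolve X P e t s\<bar>)
           \<le> (1 - real (card X) * d) ^ (t div n) * (\<Sum>s\<in>X. \<bar>e s\<bar>)"
proof -
  define c where "c = 1 - real (card X) * d"
  have "0 \<le> c"
  proof (cases "X = {}")
    case False
    then obtain r where "r \<in> X" by auto
    then show ?thesis using card_mult_lower_bound_le_one[of r d n] low by (simp add: c_def)
  qed (simp add: c_def)
  have l1_antimono: "(\<Sum>s\<in>X. \<bar>evolve X P e (a + b) s\<bar>) \<le> (\<Sum>s\<in>X. \<bar>evolve X P e a s\<bar>)" for a b
  proof (induction b)
    case (Suc b)
    show ?case using order_trans[OF l1_evolve_Suc_le Suc.IH] by simp
  qed simp
  have blocks: "(\<Sum>s\<in>X. \<bar>evolve X P e (k * n) s\<bar>) \<le> c ^ k * (\<Sum>s\<in>X. \<bar>e s\<bar>)" for k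
  proof (induction k)
    case (Suc k)
    have "(\<Sum>s\<in>X. \<bar>evolve X P e (Suc k * n) s\<bar>)
        = (\<Sum>s\<in>X. \<bar>evolve X P (evolve X P e (k * n)) n s\<bar>)"
      by (simp add: evolve_add[symmetric] add.commute)
    also have "\<dots> \<le> c * (\<Sum>s\<in>X. \<bar>evolve X P e (k * n) s\<bar>)"
      unfolding c_def using low zero_mean by (intro l1_evolve_contract) (simp_all add: sum_evolve)
    also have "\<dots> \<le> c * (c ^ k * (\<Sum>s\<in>X. \<bar>e s\<bar>))"
      using Suc \<open>0 \<le> c\<close> by (rule mult_left_mono)
    finally show ?case by simp
  qed simp
  have "(\<Sum>s\<in>X. \<bar>evolve X P e t s\<bar>) \<le> (\<Sum>s\<in>X. \<bar>evolve X P e (t div n * n) s\<bar>)"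
    using l1_antimono[of "t div n * n" "t mod n"] by simp
  also have "\<dots> \<le> c ^ (t div n) * (\<Sum>s\<in>X. \<bar>e s\<bar>)"
    by (rule blocks)
  finally show ?thesis by (simp add: c_def)
qed

end

locale doubly_stochastic_matrix = stochastic_matrix +
  assumes col_sum: "\<And>s. s \<in> X \<Longrightarrow> (\<Sum>r\<in>X. P r s) = 1"
begin

lemma evolve_const: "s \<in> X \<Longrightarrow> evolve X P (\<lambda>_. c) t s = c"
proof (induction t arbitrary: s)
  case (Suc t)
  then have "evolve X P (\<lambda>_. c) (Suc t) s = c * (\<Sum>r\<in>X. P r s)"
    by (simp add: sum_distrib_left)
  then show ?case using col_sum[OF Suc.prems] by simp
qed simp

lemma evolve_tendsto_uniform:
  assumes "0 < n" and pos: "\<And>r s. r \<in> X \<Longrightarrow> s \<in> X \<Longrightarrow> 0 < steps n r s"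
    and distr: "(\<Sum>s\<in>X. \<mu> s) = 1" and s: "s \<in> X"
  shows "(\<lambda>t. evolve X P \<mu> t s) \<longlonglongrightarrow> 1 / real (card X)"
proof -
  obtain d where "0 < d" and low_pairs: "\<And>p. p \<in> X \<times> X \<Longrightarrow> d \<le> (\<lambda>(r, s). steps n r s) p"
    by (rule finite_positive_lower_bound[of "X \<times> X" "\<lambda>(r, s). steps n r s"])
      (use finite_states pos in auto)
  from low_pairs have low: "\<forall>r\<in>X. \<forall>s\<in>X. d \<le> steps n r s" by fastforce
  define S where "S = real (card X)"
  have "0 < S" using s finite_states by (auto simp: S_def card_gt_0_iff)
  define c where "c = 1 - S * d"
  have "S * d \<le> 1"
    unfolding S_def by (rule card_mult_lower_bound_le_one[OF s]) (use low s in auto)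
  then have "0 \<le> c" by (simp add: c_def)
  have "c < 1" using \<open>0 < S\<close> \<open>0 < d\<close> by (simp add: c_def)
  define e where "e = (\<lambda>x. \<mu> x - 1 / S)"
  have zero_mean: "(\<Sum>r\<in>X. e r) = 0"
    using distr \<open>0 < S\<close> by (simp add: e_def sum_subtractf S_def)
  have bound: "\<bar>evolve X P \<mu> t s - 1 / S\<bar> \<le> c ^ (t div n) * (\<Sum>s\<in>X. \<bar>e s\<bar>)" for t
  proof -
    have "evolve X P \<mu> t s - 1 / S = evolve X P e t s"
      using evolve_diff[of X P \<mu> "\<lambda>_. 1 / S" t s] evolve_const[OF s] by (simp add: e_def)
    also have "\<bar>\<dots>\<bar> \<le> (\<Sum>s\<in>X. \<bar>evolve X P e t s\<bar>)"
      using s finite_states by (intro member_le_sum) auto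
    also have "\<dots> \<le> c ^ (t div n) * (\<Sum>s\<in>X. \<bar>e s\<bar>)"
      unfolding c_def S_def using low zero_mean by (rule l1_evolve_geometric)
    finally show ?thesis .
  qed
  show ?thesis
    unfolding S_def[symmetric] using \<open>0 < n\<close> \<open>0 \<le> c\<close> \<open>c < 1\<close> bound
    by (rule tendsto_of_abs_diff_le_power_div)
qed

end

lemma finite_node_pairs: "finite (node_pairs N)"
  by (rule finite_subset[of _ "Pow {1..N}"]) (auto simp: node_pairs_def)

lemma finite_networks: "finite (networks N M)"
  by (rule finite_subset[of _ "Pow (node_pairs N)"]) (auto simp: networks_def finite_node_pairs)

lemma card_networks: "card (networks N M) = (N * (N - 1) div 2) choose M"
proof -
  have "card (node_pairs N) = N choose 2"
    unfolding node_pairs_def by (simp add: n_subsets)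
  then show ?thesis
    unfolding networks_def by (simp add: n_subsets finite_node_pairs choose_two)
qed

lemma network_subset_node_pairs: "E \<in> networks N M \<Longrightarrow> E \<subseteq> node_pairs N"
  and card_network: "E \<in> networks N M \<Longrightarrow> card E = M"
  by (auto simp: networks_def)

lemma finite_network: "E \<in> networks N M \<Longrightarrow> finite E"
  by (rule finite_subset[OF network_subset_node_pairs finite_node_pairs])

lemma rewire_in_networks:
  assumes E: "E \<in> networks N M" and "e \<in> E" and "f \<in> node_pairs N - (E - {e})"
  shows "(E - {e}) \<union> {f} \<in> networks N M"
proof -
  have "0 < card E" using assms(2) finite_network[OF E] card_gt_0_iff by blast
  moreover have "card (insert f (E - {e})) = Suc (card E - 1)"
    using assms finite_network[OF E] by (simp add: card_insert_disjoint card_Diff_singleton)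
  ultimately have "card (insert f (E - {e})) = card E" by simp
  then show ?thesis
    using assms network_subset_node_pairs[OF E] card_network[OF E] by (auto simp: networks_def)
qed

lemma card_rewire_targets:
  assumes E: "E \<in> networks N M" and "e \<in> E"
  shows "card (node_pairs N - (E - {e})) = card (node_pairs N) - (M - 1)"
  using assms network_subset_node_pairs[OF E] finite_network[OF E] card_network[OF E]
  by (subst card_Diff_subset) auto

lemma rewire_targets_nonempty:
  assumes "E \<in> networks N M" and "e \<in> E"
  shows "0 < card (node_pairs N - (E - {e}))"
proof -
  have "e \<in> node_pairs N - (E - {e})" using assms network_subset_node_pairs by blast
  then show ?thesis using finite_node_pairs by (auto simp: card_gt_0_iff)
qed

definition rewire_moves :: "nat \<Rightarrow> nat set set \<Rightarrow> nat set set \<Rightarrow> (nat set \<times> nat set) set" where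
  "rewire_moves N E E' =
     {(e, f). e \<in> E \<and> f \<in> node_pairs N - (E - {e}) \<and> (E - {e}) \<union> {f} = E'}"

lemma finite_rewire_moves: "E \<in> networks N M \<Longrightarrow> finite (rewire_moves N E E')"
  by (rule finite_subset[of _ "E \<times> node_pairs N"])
    (auto simp: rewire_moves_def finite_network finite_node_pairs)

lemma rewire_prob_eq_card_moves:
  assumes E: "E \<in> networks N M"
  shows "rewire_prob N E E'
           = real (card (rewire_moves N E E')) / (real M * real (card (node_pairs N) - (M - 1)))"
proof -
  define A where "A e = node_pairs N - (E - {e})" for e
  define w :: real where "w = 1 / (real M * real (card (node_pairs N) - (M - 1)))"
  define ind :: "nat set \<Rightarrow> nat set \<Rightarrow> real" where
    "ind e f = (if (E - {e}) \<union> {f} = E' then 1 else 0)" for e f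
  have fin_A: "finite (A e)" for e using finite_node_pairs by (simp add: A_def)
  have "rewire_prob N E E' = w * (\<Sum>e\<in>E. \<Sum>f\<in>A e. ind e f)"
    unfolding rewire_prob_def sum_distrib_left A_def ind_def
    by (intro sum.cong refl) (simp add: card_rewire_targets[OF E] card_network[OF E] w_def)
  also have "(\<Sum>e\<in>E. \<Sum>f\<in>A e. ind e f) = (\<Sum>(e, f)\<in>Sigma E A. ind e f)"
    using finite_network[OF E] fin_A by (simp add: sum.Sigma)
  also have "\<dots> = (\<Sum>p\<in>Sigma E A. if p \<in> rewire_moves N E E' then 1 else 0)"
    by (rule sum.cong[OF refl]) (auto simp: ind_def A_def rewire_moves_def split: if_splits)
  also have "\<dots> = (\<Sum>p\<in>{p \<in> Sigma E A. p \<in> rewire_moves N E E'}. 1)"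
    by (rule sum.inter_filter[symmetric]) (use finite_network[OF E] fin_A in auto)
  also have "{p \<in> Sigma E A. p \<in> rewire_moves N E E'} = rewire_moves N E E'"
    by (auto simp: A_def rewire_moves_def)
  finally show ?thesis by (simp add: w_def)
qed

lemma rewire_moves_swap:
  assumes "(e, f) \<in> rewire_moves N E E'" and "E \<subseteq> node_pairs N"
  shows "(f, e) \<in> rewire_moves N E' E"
proof -
  have "e \<in> E" "f \<in> node_pairs N" "f \<notin> E - {e}" "(E - {e}) \<union> {f} = E'"
    using assms(1) by (auto simp: rewire_moves_def)
  moreover from this have "E' - {f} = E - {e}" by auto
  ultimately show ?thesis using assms(2) by (auto simp: rewire_moves_def)
qed

lemma card_rewire_moves_sym:
  assumes "E \<in> networks N M" and "E' \<in> networks N M"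
  shows "card (rewire_moves N E E') = card (rewire_moves N E' E)"
proof -
  have le: "card (rewire_moves N A B) \<le> card (rewire_moves N B A)"
    if "A \<in> networks N M" and "B \<in> networks N M" for A B
  proof -
    have "prod.swap ` rewire_moves N A B \<subseteq> rewire_moves N B A"
      using rewire_moves_swap network_subset_node_pairs[OF that(1)] by fastforce
    then have "card (prod.swap ` rewire_moves N A B) \<le> card (rewire_moves N B A)"
      by (rule card_mono[OF finite_rewire_moves[OF that(2)]])
    then show ?thesis by (simp add: card_image)
  qed
  show ?thesis using le[OF assms] le[OF assms(2,1)] by simp
qed

lemma rewire_prob_sym:
  assumes "E \<in> networks N M" and "E' \<in> networks N M"
  shows "rewire_prob N E E' = rewire_prob N E' E"
  using assms by (simp add: rewire_prob_eq_card_moves card_rewire_moves_sym)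

lemma rewire_prob_nonneg: "E \<in> networks N M \<Longrightarrow> 0 \<le> rewire_prob N E E'"
  by (simp add: rewire_prob_eq_card_moves)

lemma rewire_prob_pos:
  assumes E: "E \<in> networks N M" and e: "e \<in> E" and f: "f \<in> node_pairs N - (E - {e})"
  shows "0 < rewire_prob N E ((E - {e}) \<union> {f})"
proof -
  have "(e, f) \<in> rewire_moves N E ((E - {e}) \<union> {f})"
    using e f by (auto simp: rewire_moves_def)
  then have "0 < card (rewire_moves N E ((E - {e}) \<union> {f}))"
    using finite_rewire_moves[OF E] by (auto simp: card_gt_0_iff)
  moreover have "0 < M"
    using card_network[OF E] finite_network[OF E] e card_gt_0_iff by fastforce
  moreover have "0 < card (node_pairs N) - (M - 1)"
    using rewire_targets_nonempty[OF E e] card_rewire_targets[OF E e] by simp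
  ultimately show ?thesis by (simp add: rewire_prob_eq_card_moves[OF E])
qed

lemma sum_rewire_prob:
  assumes E: "E \<in> networks N M" and "0 < M"
  shows "(\<Sum>E'\<in>networks N M. rewire_prob N E E') = 1"
proof -
  define A where "A e = node_pairs N - (E - {e})" for e
  define w where "w e = 1 / real (card E) * (1 / real (card (A e)))" for e
  define rewire where "rewire e f = (E - {e}) \<union> {f}" for e f
  let ?X = "networks N M"
  have "(\<Sum>E'\<in>?X. rewire_prob N E E')
      = (\<Sum>E'\<in>?X. \<Sum>e\<in>E. \<Sum>f\<in>A e. w e * (if rewire e f = E' then 1 else 0))"
    unfolding rewire_prob_def A_def w_def rewire_def by (simp add: sum_distrib_left mult.assoc)
  also have "\<dots> = (\<Sum>e\<in>E. \<Sum>f\<in>A e. \<Sum>E'\<in>?X. w e * (if rewire e f = E' then 1 else 0))"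
    by (subst sum.swap) (intro sum.cong refl sum.swap)
  also have "\<dots> = (\<Sum>e\<in>E. \<Sum>f\<in>A e. w e)"
  proof (intro sum.cong refl)
    fix e f assume "e \<in> E" and "f \<in> A e"
    then have "rewire e f \<in> ?X"
      using rewire_in_networks[OF E] by (simp add: A_def rewire_def)
    then show "(\<Sum>E'\<in>?X. w e * (if rewire e f = E' then 1 else 0)) = w e"
      using finite_networks by (simp add: if_distrib cong: if_cong)
  qed
  also have "\<dots> = (\<Sum>e\<in>E. 1 / real (card E))"
    using rewire_targets_nonempty[OF E] by (intro sum.cong refl) (simp add: w_def A_def)
  also have "\<dots> = 1"
    using card_network[OF E] \<open>0 < M\<close> by simp
  finally show ?thesis .
qed

locale uniform_rewiring =
  fixes N M :: nat
  assumes edges_pos: "0 < M"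

sublocale uniform_rewiring \<subseteq> doubly_stochastic_matrix "networks N M" "rewire_prob N"
proof
  show "finite (networks N M)" by (rule finite_networks)
  show "0 \<le> rewire_prob N r s" if "r \<in> networks N M" for r s
    using that by (rule rewire_prob_nonneg)
  show "(\<Sum>s\<in>networks N M. rewire_prob N r s) = 1" if "r \<in> networks N M" for r
    using that edges_pos by (rule sum_rewire_prob)
  show "(\<Sum>r\<in>networks N M. rewire_prob N r s) = 1" if "s \<in> networks N M" for s
    using that edges_pos by (simp add: rewire_prob_sym[OF _ that] sum_rewire_prob cong: sum.cong)
qed

lemma rewire_steps_eq_steps:
  "rewire_steps N M t r s = evolve (networks N M) (rewire_prob N) (point_mass r) t s"
  by (induction t arbitrary: s) (auto simp: point_mass_def)

lemma rewire_dist_eq_evolve: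
  "rewire_dist N M G0 t s = evolve (networks N M) (rewire_prob N) (point_mass G0) t s"
  by (induction t arbitrary: s) (auto simp: point_mass_def)

context uniform_rewiring
begin

lemma rewire_prob_self_pos:
  assumes E: "E \<in> networks N M"
  shows "0 < rewire_prob N E E"
proof -
  obtain e where e: "e \<in> E"
    using card_network[OF E] edges_pos by fastforce
  then have "e \<in> node_pairs N - (E - {e})"
    using network_subset_node_pairs[OF E] by auto
  moreover have "(E - {e}) \<union> {e} = E" using e by auto
  ultimately show ?thesis using rewire_prob_pos[OF E e] by metis
qed

lemma steps_pos_of_card_diff_le:
  assumes "E \<in> networks N M" and "E' \<in> networks N M" and "card (E - E') \<le> t"
  shows "0 < steps t E E'"
  using assms
proof (induction "card (E - E')" arbitrary: E t)
  case 0
  then have "E \<subseteq> E'" using finite_network by auto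
  then have "E = E'"
    using 0 by (intro card_subset_eq) (auto simp: finite_network card_network)
  then show ?case using 0 steps_self_pos rewire_prob_self_pos by simp
next
  case (Suc k)
  obtain e where e: "e \<in> E" "e \<notin> E'"
    using Suc.hyps(2) by (metis Diff_eq_empty_iff card.empty nat.distinct(1) subsetI)
  have "\<not> E' \<subseteq> E"
  proof
    assume "E' \<subseteq> E"
    then have "E' = E"
      using Suc.prems by (intro card_subset_eq) (auto simp: finite_network card_network)
    with e show False by simp
  qed
  then obtain f where f: "f \<in> E'" "f \<notin> E" by auto
  define E1 where "E1 = (E - {e}) \<union> {f}"
  have f_target: "f \<in> node_pairs N - (E - {e})"
    using network_subset_node_pairs[OF Suc.prems(2)] f by auto
  have E1: "E1 \<in> networks N M"
    unfolding E1_def using Suc.prems(1) e(1) f_target by (rule rewire_in_networks)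
  have "E1 - E' = (E - E') - {e}" unfolding E1_def using f by auto
  then have "k = card (E1 - E')"
    using Suc.hyps(2) e finite_network[OF Suc.prems(1)] by simp
  then have "0 < steps (t - 1) E1 E'"
    using Suc E1 by simp
  moreover have "0 < steps 1 E E1"
    using rewire_prob_pos[OF Suc.prems(1) e(1) f_target] steps_one[OF Suc.prems(1)]
    by (simp add: E1_def)
  ultimately have "0 < steps 1 E E1 * steps (t - 1) E1 E'" by simp
  also have "\<dots> \<le> steps (1 + (t - 1)) E E'"
    using Suc.prems(1) E1 Suc.prems(2) by (rule steps_add_ge)
  finally show ?case using Suc.hyps(2) Suc.prems(3) by simp
qed

lemma steps_pos:
  assumes "E \<in> networks N M" and "E' \<in> networks N M"
  shows "0 < steps M E E'"
proof -
  have "card (E - E') \<le> card E"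
    using finite_network[OF assms(1)] by (intro card_mono) auto
  then show ?thesis
    using assms card_network[OF assms(1)] by (intro steps_pos_of_card_diff_le) auto
qed

lemma rewiring_irreducible: "rewire_irreducible N M"
  unfolding rewire_irreducible_def
proof (intro ballI)
  fix r s assume "r \<in> networks N M" and "s \<in> networks N M"
  then show "\<exists>t. 0 < rewire_steps N M t r s"
    using steps_pos by (auto simp: rewire_steps_eq_steps)
qed

lemma rewiring_aperiodic: "rewire_aperiodic N M"
  unfolding rewire_aperiodic_def
proof
  fix r assume r: "r \<in> networks N M"
  have "0 < rewire_steps N M 1 r r"
    using rewire_prob_self_pos[OF r] steps_one[OF r] by (simp add: rewire_steps_eq_steps)
  then have "Gcd {t. 0 < t \<and> 0 < rewire_steps N M t r r} dvd 1"
    by (intro Gcd_dvd) simp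
  then show "Gcd {t. 0 < t \<and> 0 < rewire_steps N M t r r} = 1" by simp
qed

lemma rewire_dist_tendsto_uniform:
  assumes "G0 \<in> networks N M" and "s \<in> networks N M"
  shows "(\<lambda>t. rewire_dist N M G0 t s) \<longlonglongrightarrow> 1 / real (card (networks N M))"
proof -
  have distr: "(\<Sum>s\<in>networks N M. point_mass G0 s) = 1"
    using assms(1) finite_networks by (simp add: point_mass_def)
  show ?thesis
    unfolding rewire_dist_eq_evolve
    by (rule evolve_tendsto_uniform[OF edges_pos steps_pos distr assms(2)])
qed

end

theorem theorem3p2:
  fixes N M :: nat and G0 :: "nat set set"
  assumes "N \<ge> 1" and "M \<ge> 1" and "G0 \<in> networks N M"
  shows "card (networks N M) = (N * (N - 1) div 2) choose M
     \<and> rewire_ergodic N M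
     \<and> (\<forall>s\<in>networks N M.
          (\<lambda>t. rewire_dist N M G0 t s) \<longlonglongrightarrow> 1 / real (card (networks N M)))"
proof -
  interpret uniform_rewiring N M
    using assms(2) by unfold_locales simp
  show ?thesis
    using card_networks rewiring_irreducible rewiring_aperiodic
      rewire_dist_tendsto_uniform[OF assms(3)]
    by (simp add: rewire_ergodic_def)
qed

end
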